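(* Let $R$ be a strict triangular $\mathcal{B}$-module algebra. Symmetric functions are quasi-symmetric: there is a canonical inclusion $\mathrm{Sym}_\infty(R)\subset\mathrm{QSym}(R)$ inside $R[[x_1,x_2,\ldots]]$.
   Context: All rings graded, power series implicitly completed. $\mathcal{B}=\mathbb{Z}\langle\phi_1,\phi_2,\ldots\rangle$ ($\phi_0=1$) is the Brouder–Frabetti–Krattenthaler Hopf algebra. A $\mathcal{B}$-module algebra $R$ is a ring with left $\mathcal{B}$-action satisfying $\phi(ab)=\sum\phi'(a)\phi''(b)$; $T=R[[x]]$ is the free left $R$-module on $x^k$ with product extending $R$'s and $xr=\sum_k\phi_k(r)x^{1+k}$. A triangular structure is an $R$-bilinear involution $\Upsilon$ of $T\otimes_RT$ satisfying the Yang–Baxter equation and compatible with multiplication and unit (as in braided Hopf algebras), given by a commutation rule $yx=\sum_{i,j\ge0}\Upsilon_{i,j}x^{1+i}y^{1+j}$ in $T\otimes_RT=R[[x,y]]$; strict means $\Upsilon_{0,0}=1$, $\Upsilon_{k,0}=0$ ($k\ge1$). It makes $R[[x_1,x_2,\ldots]]$ (limit of $T^{\otimes_Rn}$) an algebra with $x_jr=\sum\phi_k(r)x_j^{1+k}$ and $x_lx_k=\sum\Upsilon_{i,j}x_k^{1+i}x_l^{1+j}$ for $l>k$, and symmetric groups act with adjacent transpositions acting by $\Upsilon$; $\mathrm{Sym}_\infty(R)$ is the ring of invariant (symmetric) functions. For a composition $I=(i_1,\ldots,i_n)$ put $m_I=\sum_{k_1<\cdots<k_n}x_{k_1}^{i_1}\cdots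 x_{k_n}^{i_n}$; $\mathrm{QSym}(R)$ is the (completed) left $R$-module spanned freely by the $m_I$, a subalgebra of $R[[x_1,x_2,\ldots]]$. *)

theory Defs
  imports Main
begin

text \<open>
  The left action of the Brouder--Frabetti--Krattenthaler Hopf algebra B = Z<phi_1,phi_2,...>
  is given by the family phi :: nat => 'r => 'r of additive maps, with phi 0 = id
  (phi_0 = 1); words in the phi_k act by composition.

  Elements of R[[x_1,x_2,...]] (the limit of the tensor powers of T over R) are written
  uniquely in normal form  sum r_e x^e  with coefficients on the left and normal-ordered
  monomials x^e = x_{j1}^{e j1} ... x_{jn}^{e jn}, j1 < ... < jn.  We represent such an element
  by its coefficient function on exponent functions e :: nat => nat (finite support).
  Variables are indexed from 0 here: index j stands for the paper's x_{j+1}.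
  The subspace T^{(tensor n)} consists of series only involving the first n variables.
\<close>

type_synonym 'r ser = "(nat \<Rightarrow> nat) \<Rightarrow> 'r"

definition fin_supp :: "(nat \<Rightarrow> nat) \<Rightarrow> bool" where
  "fin_supp e \<longleftrightarrow> finite {j. e j \<noteq> 0}"

definition is_series :: "'r::zero ser \<Rightarrow> bool" where
  "is_series f \<longleftrightarrow> (\<forall>e. f e \<noteq> 0 \<longrightarrow> fin_supp e)"

definition in_vars :: "nat \<Rightarrow> 'r::zero ser \<Rightarrow> bool" where
  "in_vars n f \<longleftrightarrow> (\<forall>e. f e \<noteq> 0 \<longrightarrow> (\<forall>j\<ge>n. e j = 0))"

text \<open>[phi^m]_j = sum over j_1+...+j_m = j of phi_{j_1} o ... o phi_{j_m};
  it satisfies x^m b = sum_j [phi^m]_j(b) x^{m+j} in T.\<close>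
fun phipow :: "(nat \<Rightarrow> 'r \<Rightarrow> 'r) \<Rightarrow> nat \<Rightarrow> nat \<Rightarrow> 'r \<Rightarrow> 'r::comm_monoid_add" where
  "phipow \<phi> 0 j = (\<lambda>b. if j = 0 then b else 0)"
| "phipow \<phi> (Suc m) j = (\<lambda>b. \<Sum>i\<le>j. \<phi> i (phipow \<phi> m (j - i) b))"

text \<open>B-module algebra: phi_0 = 1, each phi_k additive, phi(1) = epsilon(phi) 1, and
  phi(ab) = sum phi'(a) phi''(b) for the BFK coproduct
  Delta(phi_n) = sum_{k=0}^n phi_k (tensor) [phi^{k+1}]_{n-k}
  (the convention making T = R[[x]] with x r = sum phi_k(r) x^{1+k} associative).\<close>
definition B_module_algebra :: "(nat \<Rightarrow> 'r::ring_1 \<Rightarrow> 'r) \<Rightarrow> bool" where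
  "B_module_algebra \<phi> \<longleftrightarrow>
     \<phi> 0 = id \<and>
     (\<forall>k a b. \<phi> k (a + b) = \<phi> k a + \<phi> k b) \<and>
     (\<forall>k. k \<ge> 1 \<longrightarrow> \<phi> k 1 = 0) \<and>
     (\<forall>n a b. \<phi> n (a * b) = (\<Sum>k\<le>n. \<phi> k a * phipow \<phi> (Suc k) (n - k) b))"

text \<open>Moving a scalar c to the left through a normal-ordered monomial:
  x^d c = sum_m passL d m c x^{d+m}.\<close>
definition passL :: "(nat \<Rightarrow> 'r \<Rightarrow> 'r) \<Rightarrow> (nat \<Rightarrow> nat) \<Rightarrow> (nat \<Rightarrow> nat) \<Rightarrow> 'r \<Rightarrow> 'r::comm_monoid_add" where
  "passL \<phi> d m c =
     foldr (\<lambda>j acc. phipow \<phi> (d j) (m j) acc) (sorted_list_of_set {j. d j \<noteq> 0 \<or> m j \<noteq> 0}) c"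

text \<open>A left R-linear map Upsilon on T (tensor_R) T is given by its matrix:
  Upsilon(x^a (tensor) x^b) = sum_{p,q} U a b p q x^p (tensor) x^q.
  Ups_at U k applies id^{(k)} (tensor) Upsilon (tensor) id (...) to a series, i.e. acts on
  the variables k, k+1 (the scalars produced are moved to the left through the earlier
  variables).\<close>
definition Ups_at :: "(nat \<Rightarrow> 'r \<Rightarrow> 'r) \<Rightarrow> (nat \<Rightarrow> nat \<Rightarrow> nat \<Rightarrow> nat \<Rightarrow> 'r) \<Rightarrow> nat
    \<Rightarrow> 'r::ring_1 ser \<Rightarrow> 'r ser" where
  "Ups_at \<phi> U k f = (\<lambda>e'.
     \<Sum>(d, a, b) \<in> {d. \<forall>j. (j < k \<longrightarrow> d j \<le> e' j) \<and> (k \<le> j \<longrightarrow> d j = 0)}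
                    \<times> {(a, b). U a b (e' k) (e' (Suc k)) \<noteq> 0}.
        f (\<lambda>j. if j < k then d j else if j = k then a else if j = Suc k then b else e' j)
        * passL \<phi> d (\<lambda>j. if j < k then e' j - d j else 0) (U a b (e' k) (e' (Suc k))))"

text \<open>Right multiplication of a series by a scalar r.\<close>
definition rmul :: "(nat \<Rightarrow> 'r \<Rightarrow> 'r) \<Rightarrow> 'r::ring_1 ser \<Rightarrow> 'r \<Rightarrow> 'r ser" where
  "rmul \<phi> f r = (\<lambda>e'. \<Sum>d \<in> {d. \<forall>j. d j \<le> e' j}. f d * passL \<phi> d (\<lambda>j. e' j - d j) r)"

text \<open>Multiplication of the tensor factors k and k+1 (id (tensor) mu (tensor) id).\<close>
definition merge_at :: "nat \<Rightarrow> 'r::comm_monoid_add ser \<Rightarrow> 'r ser" where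
  "merge_at k f = (\<lambda>e'. \<Sum>a\<le>e' k.
     f (\<lambda>j. if j < k then e' j else if j = k then a else if j = Suc k then e' k - a
            else e' (j - 1)))"

text \<open>Triangular structure: an R-bilinear (continuous) involution Upsilon of T (tensor_R) T
  satisfying the Yang--Baxter equation, compatible with unit and multiplication as in braided
  Hopf algebras, and given by a commutation rule
  yx = Upsilon(x (tensor) x) = sum_{i,j} Upsilon_{i,j} x^{1+i} y^{1+j}.\<close>
definition triangular :: "(nat \<Rightarrow> 'r::ring_1 \<Rightarrow> 'r) \<Rightarrow> (nat \<Rightarrow> nat \<Rightarrow> nat \<Rightarrow> nat \<Rightarrow> 'r) \<Rightarrow> bool" where
  "triangular \<phi> U \<longleftrightarrow>
     (\<forall>p q. finite {(a, b). U a b p q \<noteq> 0}) \<and>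
     (\<forall>a p q. U a 0 p q = (if p = 0 \<and> q = a then 1 else 0)) \<and>
     (\<forall>b p q. U 0 b p q = (if p = b \<and> q = 0 then 1 else 0)) \<and>
     (\<forall>q. U 1 1 0 q = 0) \<and> (\<forall>p. U 1 1 p 0 = 0) \<and>
     (\<forall>f r. in_vars 2 f \<longrightarrow> Ups_at \<phi> U 0 (rmul \<phi> f r) = rmul \<phi> (Ups_at \<phi> U 0 f) r) \<and>
     (\<forall>f. in_vars 2 f \<longrightarrow> Ups_at \<phi> U 0 (Ups_at \<phi> U 0 f) = f) \<and>
     (\<forall>f. in_vars 3 f \<longrightarrow>
        Ups_at \<phi> U 0 (Ups_at \<phi> U 1 (Ups_at \<phi> U 0 f)) =
        Ups_at \<phi> U 1 (Ups_at \<phi> U 0 (Ups_at \<phi> U 1 f))) \<and>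
     (\<forall>f. in_vars 3 f \<longrightarrow>
        Ups_at \<phi> U 0 (merge_at 0 f) = merge_at 1 (Ups_at \<phi> U 0 (Ups_at \<phi> U 1 f))) \<and>
     (\<forall>f. in_vars 3 f \<longrightarrow>
        Ups_at \<phi> U 0 (merge_at 1 f) = merge_at 0 (Ups_at \<phi> U 1 (Ups_at \<phi> U 0 f)))"

text \<open>The coefficients Upsilon_{i,j} of the commutation rule.\<close>
definition Ups_coeff :: "(nat \<Rightarrow> nat \<Rightarrow> nat \<Rightarrow> nat \<Rightarrow> 'r) \<Rightarrow> nat \<Rightarrow> nat \<Rightarrow> 'r" where
  "Ups_coeff U i j = U 1 1 (Suc i) (Suc j)"

definition strict_triangular :: "(nat \<Rightarrow> 'r::ring_1 \<Rightarrow> 'r) \<Rightarrow> (nat \<Rightarrow> nat \<Rightarrow> nat \<Rightarrow> nat \<Rightarrow> 'r) \<Rightarrow> bool" where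
  "strict_triangular \<phi> U \<longleftrightarrow> triangular \<phi> U \<and>
     Ups_coeff U 0 0 = 1 \<and> (\<forall>k\<ge>1. Ups_coeff U k 0 = 0)"

definition Sym_inf :: "(nat \<Rightarrow> 'r::ring_1 \<Rightarrow> 'r) \<Rightarrow> (nat \<Rightarrow> nat \<Rightarrow> nat \<Rightarrow> nat \<Rightarrow> 'r) \<Rightarrow> 'r ser set" where
  "Sym_inf \<phi> U = {f. is_series f \<and> (\<forall>k. Ups_at \<phi> U k f = f)}"

definition comp_of :: "(nat \<Rightarrow> nat) \<Rightarrow> nat list" where
  "comp_of e = map e (sorted_list_of_set {j. e j \<noteq> 0})"

definition m_qsym :: "nat list \<Rightarrow> 'r::zero_neq_one ser" where
  "m_qsym I = (\<lambda>e. if fin_supp e \<and> comp_of e = I then 1 else 0)"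

text \<open>The (completed) left R-linear combination sum_I c_I m_I, computed coefficientwise
  (each normal-ordered monomial occurs in exactly one m_I, namely I = comp_of e).\<close>
definition qsym_comb :: "(nat list \<Rightarrow> 'r::ring_1) \<Rightarrow> 'r ser" where
  "qsym_comb c = (\<lambda>e. c (comp_of e) * m_qsym (comp_of e) e)"

definition QSym :: "'r::ring_1 ser set" where
  "QSym = range qsym_comb"

end

theory Submission
  imports Defs
begin

(*
  The commutation rule yx = sum Upsilon_{i,j} x^{1+i} y^{1+j} has no term of degree 0 in y.
  Feeding x^a (x) x (x) x and x^a (x) x^b (x) x through the compatibility of Upsilon with
  multiplication (and inducting on b) propagates this: Upsilon(x^a (x) x^b) has a term of
  degree 0 in the right factor only when a = 0, and Upsilon(1 (x) x^b) = x^b (x) 1.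
  Consequently, at a monomial whose (k+1)-st exponent is 0, the transposition s_k just moves
  the k-th exponent one place to the right, and no scalar has to be passed through the earlier
  variables. The coefficients of a symmetric series are therefore unchanged by inserting or
  deleting zero exponents, i.e. the coefficient of x^e depends only on the composition of e.
*)

lemma B_module_algebra_phi_0:
  assumes "B_module_algebra \<phi>"
  shows "\<phi> k 0 = 0"
proof -
  have "\<phi> k (0 + 0) = \<phi> k 0 + \<phi> k 0"
    using assms unfolding B_module_algebra_def by blast
  then show ?thesis by simp
qed

lemma phipow_0:
  assumes "B_module_algebra \<phi>"
  shows "phipow \<phi> n j 0 = 0"
  by (induction n arbitrary: j) (simp_all add: B_module_algebra_phi_0[OF assms])

lemma phipow_1:
  assumes "B_module_algebra \<phi>"
  shows "phipow \<phi> n j 1 = (if j = 0 then 1 else 0)"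
proof (induction n arbitrary: j)
  case 0
  then show ?case by simp
next
  case (Suc n)
  have "phipow \<phi> (Suc n) j 1 = (\<Sum>i\<le>j. if i = j then \<phi> j 1 else 0)"
    unfolding phipow.simps by (rule sum.cong) (auto simp: Suc B_module_algebra_phi_0[OF assms])
  also have "\<dots> = (if j = 0 then 1 else 0)"
    using assms unfolding B_module_algebra_def by (cases j) auto
  finally show ?case .
qed

lemma passL_0:
  assumes "B_module_algebra \<phi>"
  shows "passL \<phi> d m 0 = 0"
proof -
  have "foldr (\<lambda>j. phipow \<phi> (d j) (m j)) js 0 = 0" for js
    by (induction js) (simp_all add: phipow_0[OF assms])
  then show ?thesis unfolding passL_def by blast
qed

lemma passL_1:
  assumes "B_module_algebra \<phi>" and "finite {j. d j \<noteq> 0 \<or> m j \<noteq> 0}"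
  shows "passL \<phi> d m 1 = (if \<forall>j. m j = 0 then 1 else 0)"
proof -
  have "foldr (\<lambda>j. phipow \<phi> (d j) (m j)) js 1 = (if \<forall>j\<in>set js. m j = 0 then 1 else 0)" for js
    by (induction js) (auto simp: phipow_0[OF assms(1)] phipow_1[OF assms(1)])
  then show ?thesis unfolding passL_def using assms(2) by auto
qed

lemma finite_funs_le_supported_lessThan:
  "finite {d :: nat \<Rightarrow> nat. \<forall>j. (j < k \<longrightarrow> d j \<le> e j) \<and> (k \<le> j \<longrightarrow> d j = 0)}"
proof (rule finite_subset)
  show "{d :: nat \<Rightarrow> nat. \<forall>j. (j < k \<longrightarrow> d j \<le> e j) \<and> (k \<le> j \<longrightarrow> d j = 0)}
    \<subseteq> {d. \<forall>j. (j \<in> {..<k} \<longrightarrow> d j \<in> {..\<Sum>i<k. e i}) \<and> (j \<notin> {..<k} \<longrightarrow> d j = 0)}"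
    using member_le_sum[of _ "{..<k}" e] by (auto intro: order_trans)
qed (rule finite_set_of_finite_funs; simp)

lemma Ups_at_0:
  "Ups_at \<phi> U 0 g e = (\<Sum>(a, b)\<in>{(a, b). U a b (e 0) (e 1) \<noteq> 0}.
     g (\<lambda>j. if j = 0 then a else if j = 1 then b else e j) * U a b (e 0) (e 1))"
proof -
  have D: "{d :: nat \<Rightarrow> nat. \<forall>j. (j < 0 \<longrightarrow> d j \<le> e j) \<and> (0 \<le> j \<longrightarrow> d j = 0)} = {\<lambda>_. 0}"
    by auto
  have P: "passL \<phi> (\<lambda>_. 0) (\<lambda>_. 0) c = c" for c
    unfolding passL_def by simp
  have S: "sum h ({c} \<times> B) = (\<Sum>y\<in>B. h (c, y))" for h c and B :: "(nat \<times> nat) set"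
    using sum.cartesian_product[of "\<lambda>x y. h (x, y)" B "{c}"] by simp
  show ?thesis
    unfolding Ups_at_def D One_nat_def by (simp add: S P)
qed

definition monomial3 :: "nat \<Rightarrow> nat \<Rightarrow> nat \<Rightarrow> 'r::zero_neq_one ser" where
  "monomial3 a b c = (\<lambda>e. if e 0 = a \<and> e 1 = b \<and> e 2 = c \<and> (\<forall>j\<ge>3. e j = 0) then 1 else 0)"

lemma monomial3_in_vars: "in_vars 3 (monomial3 a b c)"
  unfolding in_vars_def monomial3_def by auto

lemma vanishes_from_3_shift:
  fixes e :: "nat \<Rightarrow> 'a::zero"
  shows "(\<forall>j\<ge>3. e (j - 1) = 0) \<longleftrightarrow> e 2 = 0 \<and> (\<forall>j\<ge>3. e j = 0)"
proof safe
  assume h: "\<forall>j\<ge>3. e (j - 1) = 0"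
  show "e 2 = 0"
    using h[rule_format, of 3] by simp
  show "e j = 0" if "3 \<le> j" for j
    using h[rule_format, of "Suc j"] that by simp
next
  show "e (j - 1) = 0" if "e 2 = 0" "\<forall>j\<ge>3. e j = 0" "3 \<le> j" for j
    using that by (cases "j = 3") auto
qed

lemma merge_at_0_monomial3: "merge_at 0 (monomial3 a b c) = monomial3 (a + b) c 0"
proof
  fix e :: "nat \<Rightarrow> nat"
  have "merge_at 0 (monomial3 a b c) e =
      (\<Sum>t\<le>e 0. if t = a then monomial3 (a + b) c 0 e else 0)"
    unfolding merge_at_def monomial3_def vanishes_from_3_shift[symmetric]
    by (rule sum.cong) auto
  also have "\<dots> = monomial3 (a + b) c 0 e"
    by (auto simp: monomial3_def)
  finally show "merge_at 0 (monomial3 a b c) e = monomial3 (a + b) c 0 e" .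
qed

lemma merge_at_1_monomial3: "merge_at 1 (monomial3 a b c) = monomial3 a (b + c) 0"
proof
  fix e :: "nat \<Rightarrow> nat"
  have "merge_at 1 (monomial3 a b c) e =
      (\<Sum>t\<le>e 1. if t = b then monomial3 a (b + c) 0 e else 0)"
    unfolding merge_at_def monomial3_def vanishes_from_3_shift[symmetric]
    by (rule sum.cong) auto
  also have "\<dots> = monomial3 a (b + c) 0 e"
    by (auto simp: monomial3_def)
  finally show "merge_at 1 (monomial3 a b c) e = monomial3 a (b + c) 0 e" .
qed

definition exponent_of_list :: "nat list \<Rightarrow> nat \<Rightarrow> nat" where
  "exponent_of_list xs = (\<lambda>j. if j < length xs then xs ! j else 0)"

lemma exponent_of_list_snoc_0: "exponent_of_list (xs @ [0]) = exponent_of_list xs"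
  unfolding exponent_of_list_def by (auto simp: nth_append)

lemma fin_supp_eq_exponent_of_list:
  assumes "fin_supp e"
  obtains N where "e = exponent_of_list (map e [0..<N])"
    and "comp_of e = filter (\<lambda>x. x \<noteq> 0) (map e [0..<N])"
proof -
  obtain N where N: "{j. e j \<noteq> 0} \<subseteq> {..<N}"
    using assms unfolding fin_supp_def finite_nat_set_iff_bounded by blast
  then have "e = exponent_of_list (map e [0..<N])"
    unfolding exponent_of_list_def by (auto simp: fun_eq_iff)
  moreover have "sorted_list_of_set {j. e j \<noteq> 0} = filter (\<lambda>j. e j \<noteq> 0) [0..<N]"
  proof -
    have "{j. e j \<noteq> 0} = set (filter (\<lambda>j. e j \<noteq> 0) [0..<N])"
      using N by auto
    then show ?thesis
      by (metis distinct_filter distinct_upt sorted_list_of_set.idem_if_sorted_distinct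
          sorted_upt sorted_wrt_filter)
  qed
  then have "comp_of e = filter (\<lambda>x. x \<noteq> 0) (map e [0..<N])"
    unfolding comp_of_def by (simp add: filter_map comp_def)
  ultimately show ?thesis
    using that by blast
qed

locale triangular_B_module_algebra =
  fixes \<phi> :: "nat \<Rightarrow> 'r::ring_1 \<Rightarrow> 'r"
    and U :: "nat \<Rightarrow> nat \<Rightarrow> nat \<Rightarrow> nat \<Rightarrow> 'r"
  assumes module_algebra: "B_module_algebra \<phi>"
    and triangular: "triangular \<phi> U"
begin

lemma finite_U_support: "finite {(a, b). U a b p q \<noteq> 0}"
  using triangular unfolding triangular_def by blast

lemma U_left_unit: "U 0 b p q = (if p = b \<and> q = 0 then 1 else 0)"
  using triangular unfolding triangular_def by blast

lemma U_right_unit: "U a 0 p q = (if p = 0 \<and> q = a then 1 else 0)"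
  using triangular unfolding triangular_def by blast

lemma U_1_1_right_0: "U 1 1 p 0 = 0"
  using triangular unfolding triangular_def by blast

lemma Ups_at_0_merge_at_0:
  "in_vars 3 f \<Longrightarrow> Ups_at \<phi> U 0 (merge_at 0 f) = merge_at 1 (Ups_at \<phi> U 0 (Ups_at \<phi> U 1 f))"
  using triangular unfolding triangular_def by blast

lemma Ups_at_0_merge_at_1:
  "in_vars 3 f \<Longrightarrow> Ups_at \<phi> U 0 (merge_at 1 f) = merge_at 0 (Ups_at \<phi> U 1 (Ups_at \<phi> U 0 f))"
  using triangular unfolding triangular_def by blast

lemma Ups_at_0_monomial3:
  "Ups_at \<phi> U 0 (monomial3 a b c) e =
     (if e 2 = c \<and> (\<forall>j\<ge>3. e j = 0) then U a b (e 0) (e 1) else 0)"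
proof -
  have "Ups_at \<phi> U 0 (monomial3 a b c) e = (\<Sum>z\<in>{(x, y). U x y (e 0) (e 1) \<noteq> 0}.
      if z = (a, b) then (if e 2 = c \<and> (\<forall>j\<ge>3. e j = 0) then U a b (e 0) (e 1) else 0) else 0)"
    unfolding Ups_at_0 monomial3_def by (rule sum.cong) (auto split: if_splits)
  then show ?thesis
    using finite_U_support by auto
qed

lemma Ups_at_vanishes:
  assumes "\<And>d a b. U a b (e k) (e (Suc k)) = 0
     \<or> f (\<lambda>j. if j < k then d j else if j = k then a else if j = Suc k then b else e j) = 0"
  shows "Ups_at \<phi> U k f e = 0"
  unfolding Ups_at_def
proof (rule sum.neutral, clarify)
  fix d a b
  show "f (\<lambda>j. if j < k then d j else if j = k then a else if j = Suc k then b else e j)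
      * passL \<phi> d (\<lambda>j. if j < k then e j - d j else 0) (U a b (e k) (e (Suc k))) = 0"
    using assms[of a b d] by (auto simp: passL_0[OF module_algebra])
qed

lemma Ups_at_1_monomial3_1_1_vanishes:
  assumes "e 2 = 0"
  shows "Ups_at \<phi> U 1 (monomial3 a 1 1) e = 0"
  using assms U_1_1_right_0
  by (intro Ups_at_vanishes) (auto simp: monomial3_def numeral_2_eq_2)

lemma U_Suc_1_right_0: "U (Suc a) 1 p 0 = 0"
proof -
  define e :: "nat \<Rightarrow> nat" where "e = (\<lambda>j. if j = 0 then p else 0)"
  have "U (Suc a) 1 p 0 = Ups_at \<phi> U 0 (monomial3 (Suc a) 1 0) e"
    by (simp add: Ups_at_0_monomial3 e_def)
  also have "\<dots> = Ups_at \<phi> U 0 (merge_at 0 (monomial3 a 1 1)) e"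
    by (simp add: merge_at_0_monomial3)
  also have "\<dots> = merge_at 1 (Ups_at \<phi> U 0 (Ups_at \<phi> U 1 (monomial3 a 1 1))) e"
    by (rule Ups_at_0_merge_at_0[OF monomial3_in_vars, THEN fun_cong])
  also have "\<dots> = 0"
    unfolding merge_at_def
    by (rule sum.neutral)
      (auto intro!: Ups_at_vanishes Ups_at_1_monomial3_1_1_vanishes simp: e_def)
  finally show ?thesis .
qed

lemma Ups_at_1_Ups_at_0_monomial3_vanishes:
  assumes "\<And>p. U a b p 0 = 0" and "e 2 = 0"
  shows "Ups_at \<phi> U 1 (Ups_at \<phi> U 0 (monomial3 a b 1)) e = 0"
proof (rule Ups_at_vanishes)
  fix d x y
  show "U x y (e 1) (e (Suc 1)) = 0 \<or> Ups_at \<phi> U 0 (monomial3 a b 1)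
      (\<lambda>j. if j < 1 then d j else if j = 1 then x else if j = Suc 1 then y else e j) = 0"
  proof (cases "x \<noteq> 0 \<and> y = 1")
    case True
    then show ?thesis
      using U_Suc_1_right_0[of "x - 1"] assms(2) by (simp add: numeral_2_eq_2)
  next
    case False
    then show ?thesis
      using assms(1) by (auto simp: Ups_at_0_monomial3)
  qed
qed

lemma U_Suc_Suc_right_0: "U (Suc a) (Suc b) p 0 = 0"
proof (induction b arbitrary: p)
  case 0
  show ?case
    using U_Suc_1_right_0 by simp
next
  case (Suc b)
  define e :: "nat \<Rightarrow> nat" where "e = (\<lambda>j. if j = 0 then p else 0)"
  let ?f = "monomial3 (Suc a) (Suc b) 1"
  have "U (Suc a) (Suc (Suc b)) p 0 = Ups_at \<phi> U 0 (monomial3 (Suc a) (Suc (Suc b)) 0) e"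
    by (simp add: Ups_at_0_monomial3 e_def)
  also have "\<dots> = Ups_at \<phi> U 0 (merge_at 1 ?f) e"
    unfolding merge_at_1_monomial3 by simp
  also have "\<dots> = merge_at 0 (Ups_at \<phi> U 1 (Ups_at \<phi> U 0 ?f)) e"
    by (rule Ups_at_0_merge_at_1[OF monomial3_in_vars, THEN fun_cong])
  also have "\<dots> = 0"
    unfolding merge_at_def
    by (intro sum.neutral ballI Ups_at_1_Ups_at_0_monomial3_vanishes Suc.IH) (simp add: e_def)
  finally show ?case .
qed

lemma U_right_0: "U a b p 0 = (if a = 0 \<and> b = p then 1 else 0)"
  using U_left_unit U_right_unit U_Suc_Suc_right_0 by (cases a; cases b) auto

lemma Ups_at_right_0:
  assumes "e (Suc k) = 0"
  shows "Ups_at \<phi> U k f e = f (\<lambda>j. if j = k then 0 else if j = Suc k then e k else e j)"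
proof -
  let ?D = "{d. \<forall>j. (j < k \<longrightarrow> d j \<le> e j) \<and> (k \<le> j \<longrightarrow> d j = 0)}"
  let ?Z = "{(a, b). U a b (e k) (e (Suc k)) \<noteq> 0}"
  let ?g = "\<lambda>d a b. f (\<lambda>j. if j < k then d j else if j = k then a else if j = Suc k then b else e j)
      * passL \<phi> d (\<lambda>j. if j < k then e j - d j else 0) (U a b (e k) (e (Suc k)))"
  let ?swapped = "f (\<lambda>j. if j = k then 0 else if j = Suc k then e k else e j)"
  define d0 where "d0 = (\<lambda>j. if j < k then e j else (0::nat))"
  have summand: "?g d a b = (if (d, a, b) = (d0, 0, e k) then ?swapped else 0)" if "d \<in> ?D" for d a b
  proof (cases "a = 0 \<and> b = e k")
    case False
    then show ?thesis
      using assms by (auto simp: U_right_0 passL_0[OF module_algebra])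
  next
    case True
    have "finite {j. d j \<noteq> 0 \<or> (if j < k then e j - d j else 0) \<noteq> 0}"
      by (rule finite_subset[of _ "{..<k}"]) (use that in \<open>auto simp: not_less\<close>)
    moreover have "(\<forall>j. (if j < k then e j - d j else 0) = 0) \<longleftrightarrow> d = d0"
      using that by (auto simp: d0_def fun_eq_iff intro: le_antisym)
    ultimately show ?thesis
      using True assms by (auto simp: U_right_0 passL_1[OF module_algebra] d0_def intro!: arg_cong[of _ _ f])
  qed
  have "Ups_at \<phi> U k f e = (\<Sum>(d, a, b)\<in>?D \<times> ?Z. ?g d a b)"
    unfolding Ups_at_def ..
  also have "\<dots> = (\<Sum>w\<in>?D \<times> ?Z. if w = (d0, 0, e k) then ?swapped else 0)"
  proof (rule sum.cong)
    fix w
    assume "w \<in> ?D \<times> ?Z"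
    then obtain d a b where "w = (d, a, b)" and "d \<in> ?D"
      by blast
    then show "(case w of (d, a, b) \<Rightarrow> ?g d a b) = (if w = (d0, 0, e k) then ?swapped else 0)"
      using summand by simp
  qed simp
  also have "\<dots> = ?swapped"
    using assms finite_funs_le_supported_lessThan finite_U_support
    by (subst sum.delta) (auto simp: d0_def U_right_0)
  finally show ?thesis .
qed

lemma Sym_inf_coeff_swap_zero:
  assumes "f \<in> Sym_inf \<phi> U"
  shows "f (exponent_of_list (xs @ 0 # y # ys)) = f (exponent_of_list (xs @ y # 0 # ys))"
proof -
  let ?k = "length xs" and ?e = "exponent_of_list (xs @ y # 0 # ys)"
  have "?e (Suc ?k) = 0"
    unfolding exponent_of_list_def by (simp add: nth_append)
  moreover have "(\<lambda>j. if j = ?k then 0 else if j = Suc ?k then ?e ?k else ?e j)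
      = exponent_of_list (xs @ 0 # y # ys)"
    unfolding exponent_of_list_def by (auto simp: fun_eq_iff nth_append nth_Cons')
  moreover have "Ups_at \<phi> U ?k f = f"
    using assms unfolding Sym_inf_def by blast
  ultimately show ?thesis
    using Ups_at_right_0[of ?e ?k f] by simp
qed

lemma Sym_inf_coeff_drop_zero:
  assumes "f \<in> Sym_inf \<phi> U"
  shows "f (exponent_of_list (xs @ 0 # ys)) = f (exponent_of_list (xs @ ys))"
proof (induction ys arbitrary: xs)
  case Nil
  show ?case
    by (simp add: exponent_of_list_snoc_0)
next
  case (Cons y ys)
  have "f (exponent_of_list (xs @ 0 # y # ys)) = f (exponent_of_list ((xs @ [y]) @ 0 # ys))"
    using Sym_inf_coeff_swap_zero[OF assms] by simp
  also have "\<dots> = f (exponent_of_list (xs @ y # ys))"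
    using Cons.IH[of "xs @ [y]"] by simp
  finally show ?case .
qed

lemma Sym_inf_coeff_filter_zeros:
  assumes "f \<in> Sym_inf \<phi> U"
  shows "f (exponent_of_list (xs @ ys)) = f (exponent_of_list (xs @ filter (\<lambda>x. x \<noteq> 0) ys))"
proof (induction ys arbitrary: xs)
  case (Cons y ys)
  then show ?case
    using Sym_inf_coeff_drop_zero[OF assms, of xs ys] Cons.IH[of "xs @ [y]"] by (cases "y = 0") auto
qed simp

lemma Sym_inf_coeff_comp_of:
  assumes "f \<in> Sym_inf \<phi> U" and "fin_supp e"
  shows "f e = f (exponent_of_list (comp_of e))"
proof -
  obtain N where "e = exponent_of_list (map e [0..<N])"
    and "comp_of e = filter (\<lambda>x. x \<noteq> 0) (map e [0..<N])"
    using fin_supp_eq_exponent_of_list[OF assms(2)] .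
  then show ?thesis
    using Sym_inf_coeff_filter_zeros[OF assms(1), of "[]"] by simp
qed

lemma Sym_inf_eq_qsym_comb:
  assumes "f \<in> Sym_inf \<phi> U"
  shows "f = qsym_comb (\<lambda>I. f (exponent_of_list I))"
proof
  fix e
  show "f e = qsym_comb (\<lambda>I. f (exponent_of_list I)) e"
  proof (cases "fin_supp e")
    case True
    then show ?thesis
      using Sym_inf_coeff_comp_of[OF assms] by (simp add: qsym_comb_def m_qsym_def)
  next
    case False
    then have "f e = 0"
      using assms unfolding Sym_inf_def is_series_def by blast
    then show ?thesis
      using False by (simp add: qsym_comb_def m_qsym_def)
  qed
qed

lemma Sym_inf_subset_QSym: "Sym_inf \<phi> U \<subseteq> QSym"
  using Sym_inf_eq_qsym_comb unfolding QSym_def by blast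

end

theorem mainTheorem10:
  fixes \<phi> :: "nat \<Rightarrow> 'r::ring_1 \<Rightarrow> 'r"
    and U :: "nat \<Rightarrow> nat \<Rightarrow> nat \<Rightarrow> nat \<Rightarrow> 'r"
  assumes "B_module_algebra \<phi>"
    and "strict_triangular \<phi> U"
  shows "Sym_inf \<phi> U \<subseteq> QSym"
proof -
  have "triangular \<phi> U"
    using assms(2) unfolding strict_triangular_def by blast
  with assms(1) interpret triangular_B_module_algebra \<phi> U
    by unfold_locales
  show ?thesis
    by (rule Sym_inf_subset_QSym)
qed

end
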